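(* The space of increasing normalized submodular setfunctions on Borel spaces, endowed with the pseudometric $d(\varphi_1,\varphi_2)=\sum_{k=1}^\infty 2^{-k}d_H^{(k)}(Q_k(\varphi_1),Q_k(\varphi_2))$, is compact.
   Context: A setfunction on a set-algebra $(J,\mathcal{B})$ is a map $\varphi\colon\mathcal{B}\to\mathbb{R}$ with $\varphi(\emptyset)=0$; on a Borel space, $\mathcal{B}$ is the Borel sigma-algebra. It is increasing if $X\subseteq Y$ implies $\varphi(X)\le\varphi(Y)$, submodular if $\varphi(X)+\varphi(Y)\ge\varphi(X\cap Y)+\varphi(X\cup Y)$, and normalized means taking values in $[0,1]$. For $k\in\mathbb{N}$ and a map $F\colon J\to[k]$ with $F^{-1}(i)\in\mathcal{B}$, the quotient $\varphi\circ F^{-1}$ is $A\mapsto\varphi(F^{-1}(A))$ on $2^{[k]}$; $Q_k(\varphi)\subseteq\mathbb{R}^{2^k}$ is the set of all such quotients. $d_H^{(k)}$ is the Hausdorff distance on subsets of Euclidean $\mathbb{R}^{2^k}$. *)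

theory Defs
  imports "HOL-Analysis.Analysis"
begin

definition standard_borel :: "'a measure \<Rightarrow> bool" where
  "standard_borel M \<longleftrightarrow>
     (\<exists>X. completely_metrizable_space X \<and> separable_space X \<and>
          topspace X = space M \<and> sets M = sigma_sets (topspace X) (Collect (openin X)))"

definition inc_norm_submod :: "'a measure \<Rightarrow> ('a set \<Rightarrow> real) \<Rightarrow> bool" where
  "inc_norm_submod M \<phi> \<longleftrightarrow>
     \<phi> {} = 0 \<and>
     (\<forall>X\<in>sets M. 0 \<le> \<phi> X \<and> \<phi> X \<le> 1) \<and>
     (\<forall>X\<in>sets M. \<forall>Y\<in>sets M. X \<subseteq> Y \<longrightarrow> \<phi> X \<le> \<phi> Y) \<and>
     (\<forall>X\<in>sets M. \<forall>Y\<in>sets M. \<phi> X + \<phi> Y \<ge> \<phi> (X \<inter> Y) + \<phi> (X \<union> Y))"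

text \<open>Points of R^(2^k) are represented as functions on the subsets of [k] = {1..k}
  (values outside Pow {1..k} are irrelevant; quotients are set to 0 there).\<close>
definition quotient_sf :: "nat \<Rightarrow> 'a measure \<Rightarrow> ('a set \<Rightarrow> real) \<Rightarrow> ('a \<Rightarrow> nat) \<Rightarrow> (nat set \<Rightarrow> real)" where
  "quotient_sf k M \<phi> F = (\<lambda>A. if A \<subseteq> {1..k} then \<phi> (F -` A \<inter> space M) else 0)"

definition Qk :: "nat \<Rightarrow> 'a measure \<Rightarrow> ('a set \<Rightarrow> real) \<Rightarrow> (nat set \<Rightarrow> real) set" where
  "Qk k M \<phi> = {quotient_sf k M \<phi> F | F.
       F \<in> space M \<rightarrow> {1..k} \<and> (\<forall>i\<in>{1..k}. F -` {i} \<inter> space M \<in> sets M)}"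

definition dist_k :: "nat \<Rightarrow> (nat set \<Rightarrow> real) \<Rightarrow> (nat set \<Rightarrow> real) \<Rightarrow> real" where
  "dist_k k f g = sqrt (\<Sum>A\<in>Pow {1..k}. (f A - g A)\<^sup>2)"

definition hausdist_k :: "nat \<Rightarrow> (nat set \<Rightarrow> real) set \<Rightarrow> (nat set \<Rightarrow> real) set \<Rightarrow> real" where
  "hausdist_k k S T = max (SUP x\<in>S. INF y\<in>T. dist_k k x y) (SUP y\<in>T. INF x\<in>S. dist_k k x y)"

definition sf_dist :: "'a measure \<Rightarrow> ('a set \<Rightarrow> real) \<Rightarrow> 'b measure \<Rightarrow> ('b set \<Rightarrow> real) \<Rightarrow> real" where
  "sf_dist M1 \<phi>1 M2 \<phi>2 =
     (\<Sum>k. (1/2) ^ (Suc k) * hausdist_k (Suc k) (Qk (Suc k) M1 \<phi>1) (Qk (Suc k) M2 \<phi>2))"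

end

theory Submission
  imports Defs
begin

(* Sequential compactness is proved with an ultralimit realised on the countable discrete space
   \<nat> \<subseteq> \<real>.  Enumerate the tests (k, m, c), c a cell of the grid of mesh 1/m in [0,1]^(2^k),
   and for every n choose, for each of the first n tests, a k-partition of the n-th space whose
   quotient lies in c if there is one; g_n codes a point by the list of blocks containing it.
   For an ultrafilter U finer than the cofinite filter, \<psi>(X) = lim_U \<phi>_n(g_n^-1 X) is again
   increasing, normalized and submodular.  Each quotient of \<psi> is the U-limit of quotients of
   the \<phi>_n through g_n, and each grid cell met by Q_k(\<phi>_n) for U-many n is eventually met by
   a quotient factoring through g_n; the grid being finite, Q_k(\<phi>_n) \<rightarrow> Q_k(\<psi>) in Hausdorff
   distance along U.  Tannery's theorem then gives d(\<phi>_n, \<psi>) \<rightarrow> 0 along U, and a subsequence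
   converges. *)

section \<open>Ultrafilters and subsequences\<close>

definition ultrafilter :: "'a filter \<Rightarrow> bool" where
  "ultrafilter U \<longleftrightarrow> U \<noteq> bot \<and> (\<forall>P. eventually P U \<or> eventually (\<lambda>x. \<not> P x) U)"

lemma exists_maximal_filter_le:
  fixes F :: "'a filter"
  assumes "F \<noteq> bot"
  shows "\<exists>U. U \<noteq> bot \<and> U \<le> F \<and> (\<forall>G. G \<noteq> bot \<longrightarrow> G \<le> U \<longrightarrow> G = U)"
proof -
  define A where "A = {G. G \<noteq> bot \<and> G \<le> F}"
  have "\<exists>U\<in>A. \<forall>G\<in>A. G \<le> U \<longrightarrow> G = U"
  proof (rule predicate_Zorn)
    show "partial_order_on A (relation_of (\<lambda>G H. H \<le> G) A)"
      by (rule partial_order_on_relation_ofI) auto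
    fix C assume C: "C \<in> Chains (relation_of (\<lambda>G H. H \<le> G) A)"
    show "\<exists>U\<in>A. \<forall>G\<in>C. U \<le> G"
    proof (cases "C = {}")
      case True
      then show ?thesis using assms by (auto simp: A_def)
    next
      case False
      have "C \<subseteq> A" using C by (rule Chains_relation_of)
      have directed: "\<exists>H\<in>C. H \<le> inf G G'" if "G \<in> C" "G' \<in> C" for G G'
        using C that by (auto simp: Chains_def relation_of_def inf_absorb1 inf_absorb2)
      have "Inf C \<noteq> bot"
      proof
        assume "Inf C = bot"
        then obtain G where "G \<in> C" "eventually (\<lambda>_. False) G"
          using eventually_Inf_base[OF False directed] by (metis eventually_False)
        then show False using \<open>C \<subseteq> A\<close> by (auto simp: A_def)
      qed
      moreover obtain G where "G \<in> C" using False by blast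
      ultimately have "Inf C \<in> A"
        using \<open>C \<subseteq> A\<close> by (auto simp: A_def intro: Inf_lower2)
      then show ?thesis by (blast intro: Inf_lower)
    qed
  qed
  then show ?thesis by (auto simp: A_def)
qed

lemma maximal_filter_imp_ultrafilter:
  assumes "U \<noteq> bot" and maximal: "\<And>G. G \<noteq> bot \<Longrightarrow> G \<le> U \<Longrightarrow> G = U"
  shows "ultrafilter U"
proof -
  have "eventually P U \<or> eventually (\<lambda>x. \<not> P x) U" for P :: "'a \<Rightarrow> bool"
  proof (rule disjCI)
    assume "\<not> eventually (\<lambda>x. \<not> P x) U"
    then have "inf U (principal {x. P x}) = U"
      by (intro maximal) (auto simp: trivial_limit_def eventually_inf_principal)
    moreover have "eventually P (inf U (principal {x. P x}))"
      by (simp add: eventually_inf_principal)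
    ultimately show "eventually P U" by simp
  qed
  with \<open>U \<noteq> bot\<close> show ?thesis
    unfolding ultrafilter_def by (intro conjI allI)
qed

lemma ultrafilter_le_filter:
  fixes F :: "'a filter"
  assumes "F \<noteq> bot"
  shows "\<exists>U. ultrafilter U \<and> U \<le> F"
  using exists_maximal_filter_le[OF assms] maximal_filter_imp_ultrafilter by blast

lemma ultrafilter_tendsto_compact:
  fixes a :: "'b \<Rightarrow> 'c::topological_space"
  assumes "ultrafilter U" "compact S" "eventually (\<lambda>n. a n \<in> S) U"
  shows "\<exists>L\<in>S. (a \<longlongrightarrow> L) U"
proof -
  have "filtermap a U \<noteq> bot" "eventually (\<lambda>x. x \<in> S) (filtermap a U)"
    using assms by (simp_all add: ultrafilter_def eventually_filtermap filtermap_bot_iff)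
  then obtain L where "L \<in> S" and L: "inf (nhds L) (filtermap a U) \<noteq> bot"
    using \<open>compact S\<close> unfolding compact_filter by blast
  have "(a \<longlongrightarrow> L) U"
  proof (rule topological_tendstoI)
    fix V assume "open V" "L \<in> V"
    show "eventually (\<lambda>n. a n \<in> V) U"
    proof (rule ccontr)
      assume "\<not> eventually (\<lambda>n. a n \<in> V) U"
      then have "eventually (\<lambda>x. x \<notin> V) (filtermap a U)"
        using assms(1) by (auto simp: ultrafilter_def eventually_filtermap)
      moreover have "eventually (\<lambda>x. x \<in> V) (nhds L)"
        using \<open>open V\<close> \<open>L \<in> V\<close> by (rule eventually_nhds_in_open)
      ultimately have "eventually (\<lambda>_. False) (inf (nhds L) (filtermap a U))"
        unfolding eventually_inf by blast
      then show False using L by (simp add: trivial_limit_def)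
    qed
  qed
  then show ?thesis using \<open>L \<in> S\<close> by blast
qed

lemma tendsto_imp_subseq_LIMSEQ:
  fixes f :: "nat \<Rightarrow> 'b::metric_space"
  assumes "(f \<longlongrightarrow> L) F" "F \<noteq> bot" "F \<le> sequentially"
  shows "\<exists>r. strict_mono r \<and> (f \<circ> r) \<longlonglongrightarrow> L"
proof -
  have close_after: "\<exists>n>p. dist (f n) L < inverse (Suc j)" for p j
  proof -
    have "eventually (\<lambda>n. dist (f n) L < inverse (Suc j)) F"
      using assms(1) by (rule tendstoD) simp
    moreover have "eventually (\<lambda>n. p < n) F"
      using filter_leD[OF assms(3) eventually_gt_at_top] .
    ultimately have "eventually (\<lambda>n. dist (f n) L < inverse (Suc j) \<and> p < n) F"
      by (rule eventually_conj)
    from eventually_happens'[OF assms(2) this] show ?thesis by blast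
  qed
  have "\<exists>r. \<forall>j. dist (f (r j)) L < inverse (Suc j) \<and> r j < r (Suc j)"
  proof (rule dependent_nat_choice)
    show "\<exists>n. dist (f n) L < inverse (Suc 0)"
      using close_after[of 0 0] by blast
    show "\<exists>n'. dist (f n') L < inverse (Suc (Suc j)) \<and> n < n'" for n j
      using close_after[of n "Suc j"] by blast
  qed
  then obtain r where r: "\<And>j. dist (f (r j)) L < inverse (Suc j) \<and> r j < r (Suc j)"
    by blast
  have "(\<lambda>j. dist (f (r j)) L) \<longlonglongrightarrow> 0"
  proof (rule tendsto_sandwich[OF _ _ tendsto_const LIMSEQ_inverse_real_of_nat])
    show "eventually (\<lambda>j. dist (f (r j)) L \<le> inverse (real (Suc j))) sequentially"
      by (intro always_eventually allI less_imp_le r[THEN conjunct1])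
  qed simp
  then have "(\<lambda>j. f (r j)) \<longlonglongrightarrow> L"
    by (rule tendsto_dist_iff[THEN iffD2])
  moreover have "strict_mono r"
    using r by (simp add: strict_mono_Suc_iff)
  ultimately show ?thesis
    unfolding comp_def by blast
qed

section \<open>Distances in the cube [0,1]^(2^k)\<close>

definition unit_cube :: "nat \<Rightarrow> (nat set \<Rightarrow> real) set" where
  "unit_cube k = {q. \<forall>A \<subseteq> {1..k}. 0 \<le> q A \<and> q A \<le> 1}"

lemma dist_k_eq_L2_set: "dist_k k f g = L2_set (\<lambda>A. f A - g A) (Pow {1..k})"
  unfolding dist_k_def L2_set_def by simp

lemma dist_k_nonneg: "0 \<le> dist_k k f g"
  unfolding dist_k_def by (simp add: sum_nonneg)

lemma dist_k_triangle: "dist_k k f h \<le> dist_k k f g + dist_k k g h"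
proof -
  have "dist_k k f h = L2_set (\<lambda>A. (f A - g A) + (g A - h A)) (Pow {1..k})"
    unfolding dist_k_eq_L2_set by simp
  also have "\<dots> \<le> dist_k k f g + dist_k k g h"
    unfolding dist_k_eq_L2_set by (rule L2_set_triangle_ineq)
  finally show ?thesis .
qed

lemma dist_k_le_coordinatewise:
  assumes "\<And>A. A \<subseteq> {1..k} \<Longrightarrow> \<bar>f A - g A\<bar> \<le> e"
  shows "dist_k k f g \<le> 2^k * e"
proof -
  have "dist_k k f g \<le> (\<Sum>A\<in>Pow {1..k}. \<bar>f A - g A\<bar>)"
    unfolding dist_k_eq_L2_set by (rule L2_set_le_sum_abs)
  also have "\<dots> \<le> (\<Sum>A\<in>Pow {1..k}. e)"
    by (rule sum_mono) (use assms in auto)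
  also have "\<dots> = 2^k * e"
    by (simp add: card_Pow)
  finally show ?thesis .
qed

lemma dist_k_unit_cube_le:
  assumes "f \<in> unit_cube k" "g \<in> unit_cube k"
  shows "dist_k k f g \<le> sqrt 2 ^ k"
proof -
  have "(\<Sum>A\<in>Pow {1..k}. (f A - g A)\<^sup>2) \<le> (\<Sum>A\<in>Pow {1..k}. 1)"
  proof (rule sum_mono)
    fix A assume "A \<in> Pow {1..k}"
    then have "0 \<le> f A \<and> f A \<le> 1" "0 \<le> g A \<and> g A \<le> 1"
      using assms unfolding unit_cube_def by blast+
    then have "\<bar>f A - g A\<bar> \<le> 1"
      unfolding abs_le_iff by linarith
    then show "(f A - g A)\<^sup>2 \<le> 1"
      by (simp add: abs_square_le_1)
  qed
  also have "\<dots> = 2^k"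
    by (simp add: card_Pow)
  finally show ?thesis
    unfolding dist_k_def by (metis real_sqrt_le_mono real_sqrt_power)
qed

lemma tendsto_imp_eventually_dist_k_le:
  assumes "\<And>A. ((\<lambda>n. f n A) \<longlongrightarrow> g A) F" "0 < e"
  shows "eventually (\<lambda>n. dist_k k (f n) g \<le> e) F"
proof -
  have "eventually (\<lambda>n. \<forall>A\<in>Pow {1..k}. \<bar>f n A - g A\<bar> < e / 2^k) F"
    using assms by (intro eventually_ball_finite ballI) (auto simp: tendsto_iff dist_real_def)
  then show ?thesis
  proof (rule eventually_mono)
    fix n assume "\<forall>A\<in>Pow {1..k}. \<bar>f n A - g A\<bar> < e / 2^k"
    then have "dist_k k (f n) g \<le> 2^k * (e / 2^k)"
      by (intro dist_k_le_coordinatewise) (auto intro: less_imp_le)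
    then show "dist_k k (f n) g \<le> e" by simp
  qed
qed

lemma bdd_below_dist_k:
  "bdd_below ((\<lambda>y. dist_k k x y) ` T)" "bdd_below ((\<lambda>x. dist_k k x y) ` S)"
  by (rule bdd_belowI2[of _ 0], rule dist_k_nonneg)+

lemma hausdist_k_le:
  assumes "S \<noteq> {}" "T \<noteq> {}"
    and "\<forall>x\<in>S. \<exists>y\<in>T. dist_k k x y \<le> e" and "\<forall>y\<in>T. \<exists>x\<in>S. dist_k k x y \<le> e"
  shows "hausdist_k k S T \<le> e"
proof -
  have "(SUP x\<in>S. INF y\<in>T. dist_k k x y) \<le> e"
  proof (rule cSUP_least[OF assms(1)])
    fix x assume "x \<in> S"
    then obtain y where "y \<in> T" "dist_k k x y \<le> e" using assms(3) by blast
    then show "(INF y\<in>T. dist_k k x y) \<le> e"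
      by (rule cINF_lower2[OF bdd_below_dist_k(1)])
  qed
  moreover have "(SUP y\<in>T. INF x\<in>S. dist_k k x y) \<le> e"
  proof (rule cSUP_least[OF assms(2)])
    fix y assume "y \<in> T"
    then obtain x where "x \<in> S" "dist_k k x y \<le> e" using assms(4) by blast
    then show "(INF x\<in>S. dist_k k x y) \<le> e"
      by (rule cINF_lower2[OF bdd_below_dist_k(2)])
  qed
  ultimately show ?thesis unfolding hausdist_k_def by simp
qed

lemma hausdist_k_nonneg:
  assumes "S \<noteq> {}" "T \<noteq> {}" and "\<forall>x\<in>S. \<exists>y\<in>T. dist_k k x y \<le> e"
  shows "0 \<le> hausdist_k k S T"
proof -
  obtain x0 where "x0 \<in> S" using assms(1) by blast
  have "bdd_above ((\<lambda>x. INF y\<in>T. dist_k k x y) ` S)"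
  proof (rule bdd_aboveI2)
    fix x assume "x \<in> S"
    then obtain y where "y \<in> T" "dist_k k x y \<le> e" using assms(3) by blast
    then show "(INF y\<in>T. dist_k k x y) \<le> e"
      by (rule cINF_lower2[OF bdd_below_dist_k(1)])
  qed
  moreover have "0 \<le> (INF y\<in>T. dist_k k x0 y)"
    by (rule cINF_greatest[OF assms(2)]) (rule dist_k_nonneg)
  ultimately have "0 \<le> (SUP x\<in>S. INF y\<in>T. dist_k k x y)"
    using cSUP_upper[OF \<open>x0 \<in> S\<close>] by (meson order_trans)
  then show ?thesis unfolding hausdist_k_def by simp
qed

lemma hausdist_k_unit_cube:
  assumes "S \<noteq> {}" "T \<noteq> {}" "S \<subseteq> unit_cube k" "T \<subseteq> unit_cube k"
  shows "0 \<le> hausdist_k k S T \<and> hausdist_k k S T \<le> sqrt 2 ^ k"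
proof -
  have "dist_k k x y \<le> sqrt 2 ^ k" if "x \<in> S" "y \<in> T" for x y
    using that assms(3,4) by (intro dist_k_unit_cube_le) auto
  then show ?thesis
    using assms(1,2) by (intro conjI hausdist_k_nonneg hausdist_k_le) blast+
qed

lemma tendsto_hausdist_k_zero:
  assumes "\<And>n. S n \<noteq> {}" "T \<noteq> {}"
    and "\<And>\<delta>. 0 < \<delta> \<Longrightarrow> eventually (\<lambda>n. \<forall>x\<in>S n. \<exists>y\<in>T. dist_k k x y \<le> \<delta>) F"
    and "\<And>\<delta>. 0 < \<delta> \<Longrightarrow> eventually (\<lambda>n. \<forall>y\<in>T. \<exists>x\<in>S n. dist_k k x y \<le> \<delta>) F"
  shows "((\<lambda>n. hausdist_k k (S n) T) \<longlongrightarrow> 0) F"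
proof (rule order_tendstoI)
  fix a :: real assume "a < 0"
  show "eventually (\<lambda>n. a < hausdist_k k (S n) T) F"
    using assms(3)[OF zero_less_one]
  proof (rule eventually_mono)
    fix n assume "\<forall>x\<in>S n. \<exists>y\<in>T. dist_k k x y \<le> 1"
    then have "0 \<le> hausdist_k k (S n) T"
      by (rule hausdist_k_nonneg[OF assms(1,2)])
    then show "a < hausdist_k k (S n) T"
      using \<open>a < 0\<close> by linarith
  qed
next
  fix a :: real assume "0 < a"
  then have "0 < a / 2" by simp
  have "eventually (\<lambda>n. (\<forall>x\<in>S n. \<exists>y\<in>T. dist_k k x y \<le> a / 2) \<and>
      (\<forall>y\<in>T. \<exists>x\<in>S n. dist_k k x y \<le> a / 2)) F"
    by (rule eventually_conj[OF assms(3)[OF \<open>0 < a / 2\<close>] assms(4)[OF \<open>0 < a / 2\<close>]])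
  then show "eventually (\<lambda>n. hausdist_k k (S n) T < a) F"
  proof (rule eventually_mono)
    fix n assume "(\<forall>x\<in>S n. \<exists>y\<in>T. dist_k k x y \<le> a / 2) \<and>
      (\<forall>y\<in>T. \<exists>x\<in>S n. dist_k k x y \<le> a / 2)"
    then have "hausdist_k k (S n) T \<le> a / 2"
      using hausdist_k_le[OF assms(1,2)] by blast
    then show "hausdist_k k (S n) T < a"
      using \<open>0 < a\<close> by linarith
  qed
qed

section \<open>Grid cells\<close>

definition grid_cell :: "nat \<Rightarrow> nat \<Rightarrow> (nat set \<Rightarrow> real) \<Rightarrow> (nat set \<Rightarrow> int)" where
  "grid_cell k m q = (\<lambda>A\<in>Pow {1..k}. \<lfloor>real m * q A\<rfloor>)"

definition grid :: "nat \<Rightarrow> nat \<Rightarrow> (nat set \<Rightarrow> int) set" where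
  "grid k m = Pow {1..k} \<rightarrow>\<^sub>E {0..int m}"

lemma finite_grid: "finite (grid k m)"
  unfolding grid_def by (intro finite_PiE) auto

lemma grid_nonempty: "grid k m \<noteq> {}"
  unfolding grid_def by (simp add: PiE_eq_empty_iff)

lemma grid_cell_in_grid:
  assumes "q \<in> unit_cube k"
  shows "grid_cell k m q \<in> grid k m"
proof -
  have "\<lfloor>real m * q A\<rfloor> \<in> {0..int m}" if "A \<subseteq> {1..k}" for A
  proof -
    have "0 \<le> real m * q A" "real m * q A \<le> real m"
      using assms that by (auto simp: unit_cube_def mult_left_le)
    then show ?thesis by (auto simp: floor_le_iff le_floor_iff)
  qed
  then show ?thesis unfolding grid_cell_def grid_def by auto
qed

lemma dist_k_le_if_same_grid_cell:
  assumes "0 < m" "grid_cell k m p = grid_cell k m q"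
  shows "dist_k k p q \<le> 2^k / real m"
proof -
  have "\<bar>p A - q A\<bar> \<le> 1 / real m" if "A \<subseteq> {1..k}" for A
  proof -
    have same_floor: "\<lfloor>real m * p A\<rfloor> = \<lfloor>real m * q A\<rfloor>"
      using fun_cong[OF assms(2), of A] that by (simp add: grid_cell_def)
    have "\<bar>real m * p A - real m * q A\<bar> \<le> 1"
      using floor_correct[of "real m * p A"] floor_correct[of "real m * q A"]
      unfolding same_floor by linarith
    then have "real m * \<bar>p A - q A\<bar> \<le> 1"
      by (simp add: abs_mult right_diff_distrib[symmetric])
    then show ?thesis
      using assms(1) by (simp add: field_simps)
  qed
  then have "dist_k k p q \<le> 2^k * (1 / real m)"
    by (rule dist_k_le_coordinatewise)
  then show ?thesis by simp
qed

lemma exists_grid_mesh_le: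
  assumes "0 < \<delta>"
  shows "\<exists>m>0. 2^k / real m \<le> \<delta>"
proof -
  obtain m :: nat where m: "2^k / \<delta> < real m"
    using reals_Archimedean2 by blast
  moreover have "0 < 2^k / \<delta>"
    using assms by simp
  ultimately have "0 < real m"
    by linarith
  moreover from m have "2^k / real m \<le> \<delta>"
    using assms \<open>0 < real m\<close> by (simp add: field_simps)
  ultimately show ?thesis
    by (intro exI[of _ m]) auto
qed

text \<open>Both halves of Hausdorff convergence reduce, via the finite grid, to finitely many
  pointwise limits.\<close>

lemma eventually_approximates_finite:
  assumes "finite Y" "0 < e"
    and approx: "\<And>y. y \<in> Y \<Longrightarrow>
      \<exists>w. eventually (\<lambda>n. w n \<in> S n) F \<and> (\<forall>A. ((\<lambda>n. w n A) \<longlongrightarrow> y A) F)"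
  shows "eventually (\<lambda>n. \<forall>y\<in>Y. \<exists>x\<in>S n. dist_k k x y \<le> e) F"
proof (rule eventually_ball_finite[OF \<open>finite Y\<close>], rule ballI)
  fix y assume "y \<in> Y"
  then obtain w where in_S: "eventually (\<lambda>n. w n \<in> S n) F" and lim: "\<And>A. ((\<lambda>n. w n A) \<longlongrightarrow> y A) F"
    using approx by blast
  have "eventually (\<lambda>n. w n \<in> S n \<and> dist_k k (w n) y \<le> e) F"
    using in_S tendsto_imp_eventually_dist_k_le[OF lim \<open>0 < e\<close>] by (rule eventually_conj)
  then show "eventually (\<lambda>n. \<exists>x\<in>S n. dist_k k x y \<le> e) F"
    by (rule eventually_mono) blast
qed

lemma eventually_target_covered:
  assumes "T \<subseteq> unit_cube k" "0 < \<delta>"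
    and approx: "\<And>y. y \<in> T \<Longrightarrow>
      \<exists>w. eventually (\<lambda>n. w n \<in> S n) F \<and> (\<forall>A. ((\<lambda>n. w n A) \<longlongrightarrow> y A) F)"
  shows "eventually (\<lambda>n. \<forall>y\<in>T. \<exists>x\<in>S n. dist_k k x y \<le> \<delta>) F"
proof -
  obtain m where m: "0 < m" "2^k / real m \<le> \<delta> / 2"
    using exists_grid_mesh_le[of "\<delta> / 2"] \<open>0 < \<delta>\<close> by auto
  define C where "C = grid_cell k m ` T"
  have "C \<subseteq> grid k m"
    using grid_cell_in_grid assms(1) by (auto simp: C_def)
  then have "finite C"
    using finite_grid by (rule finite_subset)
  have "\<forall>c\<in>C. \<exists>y. y \<in> T \<and> grid_cell k m y = c"
    by (auto simp: C_def)
  from bchoice[OF this] obtain rep where rep: "\<And>c. c \<in> C \<Longrightarrow> rep c \<in> T \<and> grid_cell k m (rep c) = c"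
    by blast
  have "\<exists>w. eventually (\<lambda>n. w n \<in> S n) F \<and> (\<forall>A. ((\<lambda>n. w n A) \<longlongrightarrow> y A) F)"
    if "y \<in> rep ` C" for y
    using that approx rep by blast
  then have "eventually (\<lambda>n. \<forall>y\<in>rep ` C. \<exists>x\<in>S n. dist_k k x y \<le> \<delta> / 2) F"
    using \<open>finite C\<close> \<open>0 < \<delta>\<close> by (intro eventually_approximates_finite finite_imageI) auto
  then show ?thesis
  proof (rule eventually_mono)
    fix n assume near: "\<forall>y\<in>rep ` C. \<exists>x\<in>S n. dist_k k x y \<le> \<delta> / 2"
    show "\<forall>y\<in>T. \<exists>x\<in>S n. dist_k k x y \<le> \<delta>"
    proof
      fix y assume "y \<in> T"
      define c where "c = grid_cell k m y"
      have "c \<in> C" using \<open>y \<in> T\<close> by (simp add: C_def c_def)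
      then obtain x where "x \<in> S n" and x: "dist_k k x (rep c) \<le> \<delta> / 2"
        using near by blast
      have "dist_k k (rep c) y \<le> 2^k / real m"
        using rep[OF \<open>c \<in> C\<close>] by (intro dist_k_le_if_same_grid_cell[OF m(1)]) (simp add: c_def)
      then have "dist_k k x y \<le> \<delta>"
        using dist_k_triangle[of k x y "rep c"] x m(2) by linarith
      then show "\<exists>x\<in>S n. dist_k k x y \<le> \<delta>"
        using \<open>x \<in> S n\<close> by blast
    qed
  qed
qed

lemma eventually_cell_near_limit:
  assumes "0 < m" "0 < e"
    and "eventually (\<lambda>n. grid_cell k m (w n) = c) F" "\<And>A. ((\<lambda>n. w n A) \<longlongrightarrow> y A) F"
  shows "eventually (\<lambda>n. \<forall>x. grid_cell k m x = c \<longrightarrow> dist_k k x y \<le> 2^k / real m + e) F"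
proof -
  have "eventually (\<lambda>n. grid_cell k m (w n) = c \<and> dist_k k (w n) y \<le> e) F"
    using assms(3) tendsto_imp_eventually_dist_k_le[OF assms(4,2)] by (rule eventually_conj)
  then show ?thesis
  proof (rule eventually_mono)
    fix n assume wn: "grid_cell k m (w n) = c \<and> dist_k k (w n) y \<le> e"
    show "\<forall>x. grid_cell k m x = c \<longrightarrow> dist_k k x y \<le> 2^k / real m + e"
    proof (intro allI impI)
      fix x assume "grid_cell k m x = c"
      then have "dist_k k x (w n) \<le> 2^k / real m"
        using wn by (intro dist_k_le_if_same_grid_cell[OF assms(1)]) simp
      then show "dist_k k x y \<le> 2^k / real m + e"
        using dist_k_triangle[of k x y "w n"] wn by linarith
    qed
  qed
qed

lemma eventually_source_covered:
  assumes "ultrafilter U" "\<And>n. S n \<subseteq> unit_cube k" "0 < \<delta>"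
    and approx: "\<And>m c. eventually (\<lambda>n. \<exists>x\<in>S n. grid_cell k m x = c) U \<Longrightarrow>
      \<exists>w. \<exists>y\<in>T. eventually (\<lambda>n. grid_cell k m (w n) = c) U \<and> (\<forall>A. ((\<lambda>n. w n A) \<longlongrightarrow> y A) U)"
  shows "eventually (\<lambda>n. \<forall>x\<in>S n. \<exists>y\<in>T. dist_k k x y \<le> \<delta>) U"
proof -
  obtain m where m: "0 < m" "2^k / real m \<le> \<delta> / 2"
    using exists_grid_mesh_le[of "\<delta> / 2"] \<open>0 < \<delta>\<close> by auto
  have cell_covered:
    "eventually (\<lambda>n. \<forall>x\<in>S n. grid_cell k m x = c \<longrightarrow> (\<exists>y\<in>T. dist_k k x y \<le> \<delta>)) U" for c
  proof -
    consider (occupied) "eventually (\<lambda>n. \<exists>x\<in>S n. grid_cell k m x = c) U"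
      | (empty) "eventually (\<lambda>n. \<not> (\<exists>x\<in>S n. grid_cell k m x = c)) U"
      using \<open>ultrafilter U\<close> unfolding ultrafilter_def by blast
    then show ?thesis
    proof cases
      case occupied
      then obtain w y where "y \<in> T" and cell: "eventually (\<lambda>n. grid_cell k m (w n) = c) U"
        and lim: "\<And>A. ((\<lambda>n. w n A) \<longlongrightarrow> y A) U"
        using approx by blast
      have le: "2^k / real m + \<delta> / 2 \<le> \<delta>"
        using m(2) by linarith
      have "eventually (\<lambda>n. \<forall>x. grid_cell k m x = c \<longrightarrow> dist_k k x y \<le> 2^k / real m + \<delta> / 2) U"
        using m(1) \<open>0 < \<delta>\<close> cell lim by (intro eventually_cell_near_limit) auto
      then show ?thesis
      proof (rule eventually_mono)
        fix n assume near: "\<forall>x. grid_cell k m x = c \<longrightarrow> dist_k k x y \<le> 2^k / real m + \<delta> / 2"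
        show "\<forall>x\<in>S n. grid_cell k m x = c \<longrightarrow> (\<exists>y\<in>T. dist_k k x y \<le> \<delta>)"
        proof (intro ballI impI)
          fix x assume "grid_cell k m x = c"
          then have "dist_k k x y \<le> 2^k / real m + \<delta> / 2"
            using near by blast
          then show "\<exists>y\<in>T. dist_k k x y \<le> \<delta>"
            using \<open>y \<in> T\<close> le by (intro bexI[of _ y]) simp_all
        qed
      qed
    next
      case empty
      then show ?thesis by (rule eventually_mono) blast
    qed
  qed
  have "eventually (\<lambda>n. \<forall>c\<in>grid k m.
      \<forall>x\<in>S n. grid_cell k m x = c \<longrightarrow> (\<exists>y\<in>T. dist_k k x y \<le> \<delta>)) U"
    by (intro eventually_ball_finite finite_grid ballI cell_covered)
  then show ?thesis
    by (rule eventually_mono) (use assms(2) grid_cell_in_grid in blast)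
qed

section \<open>Quotients and push-forwards of setfunctions\<close>

definition quotient_map :: "nat \<Rightarrow> 'a measure \<Rightarrow> ('a \<Rightarrow> nat) \<Rightarrow> bool" where
  "quotient_map k M F \<longleftrightarrow> F \<in> space M \<rightarrow> {1..k} \<and> (\<forall>i\<in>{1..k}. F -` {i} \<inter> space M \<in> sets M)"

lemma Qk_eq_image: "Qk k M \<phi> = quotient_sf k M \<phi> ` {F. quotient_map k M F}"
  unfolding Qk_def quotient_map_def by auto

lemma quotient_map_const: "1 \<le> k \<Longrightarrow> quotient_map k M (\<lambda>_. 1)"
  unfolding quotient_map_def by auto

lemma Qk_nonempty: "1 \<le> k \<Longrightarrow> Qk k M \<phi> \<noteq> {}"
  unfolding Qk_eq_image using quotient_map_const by blast

lemma quotient_map_measurable: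
  assumes "quotient_map k M F"
  shows "F \<in> measurable M (count_space UNIV)"
  unfolding measurable_count_space_eq2_countable
proof (intro conjI ballI)
  fix i :: nat
  show "F -` {i} \<inter> space M \<in> sets M"
  proof (cases "i \<in> {1..k}")
    case True
    then show ?thesis using assms by (simp add: quotient_map_def)
  next
    case False
    then have "F -` {i} \<inter> space M = {}"
      using assms by (auto simp: quotient_map_def)
    then show ?thesis by simp
  qed
qed simp

lemma quotient_map_preimage_sets:
  assumes "quotient_map k M F" "A \<subseteq> {1..k}"
  shows "F -` A \<inter> space M \<in> sets M"
proof -
  have "F -` A \<inter> space M = (\<Union>i\<in>A. F -` {i} \<inter> space M)" by auto
  also have "\<dots> \<in> sets M"
    using assms finite_subset[OF assms(2)] by (intro sets.finite_UN) (auto simp: quotient_map_def)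
  finally show ?thesis .
qed

lemma quotient_map_comp:
  assumes "quotient_map k N G" "g \<in> measurable M N"
  shows "quotient_map k M (G \<circ> g)"
proof -
  have "(G \<circ> g) -` {i} \<inter> space M \<in> sets M" if "i \<in> {1..k}" for i
  proof -
    have "(G \<circ> g) -` {i} \<inter> space M = g -` (G -` {i} \<inter> space N) \<inter> space M"
      using measurable_space[OF assms(2)] by auto
    also have "\<dots> \<in> sets M"
      using assms(1) that by (intro measurable_sets[OF assms(2)]) (simp add: quotient_map_def)
    finally show ?thesis .
  qed
  moreover have "G \<circ> g \<in> space M \<rightarrow> {1..k}"
    using assms(1) measurable_space[OF assms(2)] by (auto simp: quotient_map_def)
  ultimately show ?thesis
    by (simp add: quotient_map_def)
qed

lemma quotient_sf_cong:
  assumes "\<And>x. x \<in> space M \<Longrightarrow> F x = G x"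
  shows "quotient_sf k M \<phi> F = quotient_sf k M \<phi> G"
proof -
  have "F -` A \<inter> space M = G -` A \<inter> space M" for A
    using assms by auto
  then show ?thesis by (simp only: quotient_sf_def)
qed

lemma Qk_subset_unit_cube:
  assumes "inc_norm_submod M \<phi>"
  shows "Qk k M \<phi> \<subseteq> unit_cube k"
proof
  fix q assume "q \<in> Qk k M \<phi>"
  then obtain F where F: "quotient_map k M F" and q: "q = quotient_sf k M \<phi> F"
    by (auto simp: Qk_eq_image)
  show "q \<in> unit_cube k"
    using assms quotient_map_preimage_sets[OF F]
    by (auto simp: q unit_cube_def quotient_sf_def inc_norm_submod_def)
qed

definition pushforward_sf :: "'a measure \<Rightarrow> ('a set \<Rightarrow> real) \<Rightarrow> ('a \<Rightarrow> 'b) \<Rightarrow> 'b set \<Rightarrow> real" where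
  "pushforward_sf M \<phi> g X = \<phi> (g -` X \<inter> space M)"

lemma inc_norm_submod_pushforward:
  assumes \<phi>: "inc_norm_submod M \<phi>" and g: "g \<in> measurable M N"
  shows "inc_norm_submod N (pushforward_sf M \<phi> g)"
proof -
  have preimage_Int: "g -` (X \<inter> Y) \<inter> space M = (g -` X \<inter> space M) \<inter> (g -` Y \<inter> space M)"
    and preimage_Un: "g -` (X \<union> Y) \<inter> space M = (g -` X \<inter> space M) \<union> (g -` Y \<inter> space M)"
    and preimage_mono: "X \<subseteq> Y \<Longrightarrow> g -` X \<inter> space M \<subseteq> g -` Y \<inter> space M" for X Y
    by auto
  have sets: "g -` X \<inter> space M \<in> sets M" if "X \<in> sets N" for X
    using g that by (rule measurable_sets)
  show ?thesis
    unfolding inc_norm_submod_def pushforward_sf_def preimage_Int preimage_Un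
  proof (intro conjI ballI impI)
    show "\<phi> (g -` {} \<inter> space M) = 0"
      using \<phi> by (simp add: inc_norm_submod_def)
  next
    fix X assume "X \<in> sets N"
    then have "g -` X \<inter> space M \<in> sets M" by (rule sets)
    then show "0 \<le> \<phi> (g -` X \<inter> space M)" "\<phi> (g -` X \<inter> space M) \<le> 1"
      using \<phi> unfolding inc_norm_submod_def by blast+
  next
    fix X Y assume "X \<in> sets N" "Y \<in> sets N" "X \<subseteq> Y"
    then have "g -` X \<inter> space M \<in> sets M" "g -` Y \<inter> space M \<in> sets M"
      by (simp_all add: sets)
    then show "\<phi> (g -` X \<inter> space M) \<le> \<phi> (g -` Y \<inter> space M)"
      using \<phi> preimage_mono[OF \<open>X \<subseteq> Y\<close>] unfolding inc_norm_submod_def by blast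
  next
    fix X Y assume "X \<in> sets N" "Y \<in> sets N"
    then have "g -` X \<inter> space M \<in> sets M" "g -` Y \<inter> space M \<in> sets M"
      by (simp_all add: sets)
    then show "\<phi> ((g -` X \<inter> space M) \<inter> (g -` Y \<inter> space M)) +
        \<phi> ((g -` X \<inter> space M) \<union> (g -` Y \<inter> space M)) \<le>
        \<phi> (g -` X \<inter> space M) + \<phi> (g -` Y \<inter> space M)"
      using \<phi> unfolding inc_norm_submod_def by blast
  qed
qed

lemma quotient_sf_pushforward:
  assumes "g \<in> space M \<rightarrow> space N"
  shows "quotient_sf k N (pushforward_sf M \<phi> g) G = quotient_sf k M \<phi> (G \<circ> g)"
proof -
  have "g -` (G -` A \<inter> space N) \<inter> space M = (G \<circ> g) -` A \<inter> space M" for A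
    using assms by auto
  then show ?thesis by (simp only: quotient_sf_def pushforward_sf_def)
qed

lemma inc_norm_submod_limit:
  assumes "F \<noteq> bot" "\<And>n. inc_norm_submod N (\<psi> n)"
    and lim: "\<And>X. X \<in> sets N \<Longrightarrow> ((\<lambda>n. \<psi> n X) \<longlongrightarrow> \<psi>' X) F"
  shows "inc_norm_submod N \<psi>'"
  unfolding inc_norm_submod_def
proof (intro conjI ballI impI)
  have "((\<lambda>n. \<psi> n {}) \<longlongrightarrow> 0) F"
    using assms(2) by (simp add: inc_norm_submod_def)
  then show "\<psi>' {} = 0"
    using tendsto_unique[OF assms(1) lim] by blast
next
  fix X assume "X \<in> sets N"
  then show "0 \<le> \<psi>' X" "\<psi>' X \<le> 1"
    using assms(2)
    by (auto intro!: tendsto_lowerbound[OF lim] tendsto_upperbound[OF lim] always_eventually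
        simp: assms(1) inc_norm_submod_def)
next
  fix X Y assume "X \<in> sets N" "Y \<in> sets N" "X \<subseteq> Y"
  then show "\<psi>' X \<le> \<psi>' Y"
    using assms(2)
    by (intro tendsto_le[OF _ lim lim]) (auto simp: assms(1) inc_norm_submod_def)
next
  fix X Y assume "X \<in> sets N" "Y \<in> sets N"
  then show "\<psi>' (X \<inter> Y) + \<psi>' (X \<union> Y) \<le> \<psi>' X + \<psi>' Y"
    using assms(2)
    by (intro tendsto_le[OF _ tendsto_add[OF lim lim] tendsto_add[OF lim lim]])
      (auto simp: assms(1) inc_norm_submod_def)
qed

lemma tendsto_quotient_sf:
  assumes "quotient_map k N G" and lim: "\<And>X. X \<in> sets N \<Longrightarrow> ((\<lambda>n. \<psi> n X) \<longlongrightarrow> \<psi>' X) F"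
  shows "((\<lambda>n. quotient_sf k N (\<psi> n) G A) \<longlongrightarrow> quotient_sf k N \<psi>' G A) F"
  using lim[OF quotient_map_preimage_sets[OF assms(1)]] by (simp add: quotient_sf_def)

lemma standard_borel_count_space:
  assumes "countable S"
  shows "standard_borel (count_space S)"
  unfolding standard_borel_def
proof (intro exI[of _ "discrete_topology S"] conjI)
  have "Collect (openin (discrete_topology S)) = Pow S" by auto
  then show "sets (count_space S) =
      sigma_sets (topspace (discrete_topology S)) (Collect (openin (discrete_topology S)))"
    by (simp add: sigma_algebra.sigma_sets_eq[OF sigma_algebra_Pow])
qed (use assms in \<open>simp_all add: completely_metrizable_space_discrete_topology
      separable_space_discrete_topology\<close>)

section \<open>Coding the test partitions into \<nat>\<close>

definition tests :: "(nat \<times> nat \<times> (nat set \<Rightarrow> int)) set" where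
  "tests = {(k, m, c). 1 \<le> k \<and> c \<in> grid k m}"

lemma countable_tests: "countable tests"
proof (rule countable_subset)
  show "tests \<subseteq> (\<Union>k. \<Union>m. (\<lambda>c. (k, m, c)) ` grid k m)"
    by (auto simp: tests_def)
  show "countable (\<Union>k. \<Union>m. (\<lambda>c. (k, m, c)) ` grid k m)"
    by (intro countable_UN countableI_type countable_finite finite_imageI finite_grid)
qed

definition test :: "nat \<Rightarrow> nat \<times> nat \<times> (nat set \<Rightarrow> int)" where
  "test = from_nat_into tests"

lemma test_in_tests: "test i \<in> tests"
proof -
  obtain c where "c \<in> grid 1 0" using grid_nonempty by blast
  then have "tests \<noteq> {}" by (auto simp: tests_def)
  then show ?thesis unfolding test_def by (rule from_nat_into)
qed

lemma surj_test: "(k, m, c) \<in> tests \<Longrightarrow> \<exists>i. test i = (k, m, c)"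
  unfolding test_def by (rule from_nat_into_surj[OF countable_tests])

definition cell_map :: "nat \<Rightarrow> nat \<Rightarrow> (nat set \<Rightarrow> int) \<Rightarrow> 'a measure \<Rightarrow> ('a set \<Rightarrow> real) \<Rightarrow> 'a \<Rightarrow> nat" where
  "cell_map k m c M \<phi> =
     (if \<exists>F. quotient_map k M F \<and> grid_cell k m (quotient_sf k M \<phi> F) = c
      then SOME F. quotient_map k M F \<and> grid_cell k m (quotient_sf k M \<phi> F) = c
      else (\<lambda>_. 1))"

lemma quotient_map_cell_map:
  assumes "1 \<le> k"
  shows "quotient_map k M (cell_map k m c M \<phi>)"
proof (cases "\<exists>F. quotient_map k M F \<and> grid_cell k m (quotient_sf k M \<phi> F) = c")
  case True
  show ?thesis
    unfolding cell_map_def if_P[OF True] by (rule someI_ex[OF True, THEN conjunct1])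
next
  case False
  show ?thesis
    unfolding cell_map_def if_not_P[OF False] by (rule quotient_map_const[OF assms])
qed

lemma grid_cell_cell_map:
  assumes "\<exists>F. quotient_map k M F \<and> grid_cell k m (quotient_sf k M \<phi> F) = c"
  shows "grid_cell k m (quotient_sf k M \<phi> (cell_map k m c M \<phi>)) = c"
  unfolding cell_map_def if_P[OF assms] by (rule someI_ex[OF assms, THEN conjunct2])

definition test_map :: "'a measure \<Rightarrow> ('a set \<Rightarrow> real) \<Rightarrow> nat \<Rightarrow> 'a \<Rightarrow> nat" where
  "test_map M \<phi> i = (case test i of (k, m, c) \<Rightarrow> cell_map k m c M \<phi>)"

lemma quotient_map_test_map: "quotient_map (fst (test i)) M (test_map M \<phi> i)"
  using test_in_tests[of i] quotient_map_cell_map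
  by (auto simp: test_map_def tests_def split: prod.splits)

definition encode :: "'a measure \<Rightarrow> ('a set \<Rightarrow> real) \<Rightarrow> nat \<Rightarrow> 'a \<Rightarrow> real" where
  "encode M \<phi> n x = real (to_nat (map (\<lambda>i. test_map M \<phi> i x) [0..<n]))"

text \<open>Junk outside the range of encode is sent to block 1, so decode i is always a partition.\<close>

definition decode :: "nat \<Rightarrow> real \<Rightarrow> nat" where
  "decode i y =
     (let l = (from_nat (nat \<lfloor>y\<rfloor>) :: nat list)
      in if i < length l \<and> l ! i \<in> {1..fst (test i)} then l ! i else 1)"

lemma measurable_map_upt:
  fixes f :: "nat \<Rightarrow> 'a \<Rightarrow> 'b::countable"
  assumes "\<And>i. f i \<in> measurable M (count_space UNIV)"
  shows "(\<lambda>x. map (\<lambda>i. f i x) [0..<n]) \<in> measurable M (count_space UNIV)"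
  unfolding measurable_count_space_eq2_countable
proof (intro conjI ballI)
  fix l :: "'b list"
  show "(\<lambda>x. map (\<lambda>i. f i x) [0..<n]) -` {l} \<inter> space M \<in> sets M"
  proof (cases "length l = n")
    case True
    have "map (\<lambda>i. f i x) [0..<n] = l \<longleftrightarrow> (\<forall>i\<in>{..<n}. f i x = l ! i)" for x
      using True by (auto simp: list_eq_iff_nth_eq)
    then have "(\<lambda>x. map (\<lambda>i. f i x) [0..<n]) -` {l} \<inter> space M =
        {x\<in>space M. \<forall>i\<in>{..<n}. f i x = l ! i}"
      by blast
    moreover have "{x\<in>space M. \<forall>i\<in>{..<n}. f i x = l ! i} \<in> sets M"
    proof (rule sets.sets_Collect_finite_All)
      fix i
      have "f i -` {l ! i} \<inter> space M \<in> sets M"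
        by (rule measurable_sets[OF assms]) simp
      moreover have "{x\<in>space M. f i x = l ! i} = f i -` {l ! i} \<inter> space M"
        by blast
      ultimately show "{x\<in>space M. f i x = l ! i} \<in> sets M"
        by simp
    qed simp
    ultimately show ?thesis
      by simp
  next
    case False
    then have "(\<lambda>x. map (\<lambda>i. f i x) [0..<n]) -` {l} \<inter> space M = {}" by auto
    then show ?thesis by simp
  qed
qed simp

lemma encode_measurable: "encode M \<phi> n \<in> measurable M (count_space \<nat>)"
proof -
  have "(\<lambda>x. map (\<lambda>i. test_map M \<phi> i x) [0..<n]) \<in> measurable M (count_space UNIV)"
    by (intro measurable_map_upt quotient_map_measurable[OF quotient_map_test_map])
  moreover have "(\<lambda>l. real (to_nat l)) \<in> measurable (count_space UNIV) (count_space \<nat>)"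
    by simp
  ultimately show ?thesis
    unfolding encode_def by (rule measurable_compose)
qed

lemma decode_encode:
  assumes "i < n" "x \<in> space M"
  shows "decode i (encode M \<phi> n x) = test_map M \<phi> i x"
  using assms quotient_map_test_map[of i M \<phi>]
  by (auto simp: decode_def encode_def quotient_map_def Pi_iff)

lemma quotient_map_decode: "quotient_map (fst (test i)) (count_space \<nat>) (decode i)"
  using test_in_tests[of i] by (auto simp: quotient_map_def decode_def tests_def Let_def)

section \<open>The ultralimit of a sequence of setfunctions\<close>

locale ultralimit_sf =
  fixes M :: "nat \<Rightarrow> 'a measure" and \<phi> :: "nat \<Rightarrow> 'a set \<Rightarrow> real" and U :: "nat filter"
  assumes inc_norm_submod: "\<And>n. inc_norm_submod (M n) (\<phi> n)"
    and ultrafilter: "ultrafilter U"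
    and le_sequentially: "U \<le> sequentially"
begin

abbreviation pushed :: "nat \<Rightarrow> real set \<Rightarrow> real" where
  "pushed n \<equiv> pushforward_sf (M n) (\<phi> n) (encode (M n) (\<phi> n) n)"

definition limit_sf :: "real set \<Rightarrow> real" where
  "limit_sf X = Lim U (\<lambda>n. pushed n X)"

lemma U_nontrivial: "U \<noteq> bot"
  using ultrafilter by (simp add: ultrafilter_def)

lemma inc_norm_submod_pushed: "inc_norm_submod (count_space \<nat>) (pushed n)"
  by (rule inc_norm_submod_pushforward[OF inc_norm_submod encode_measurable])

lemma tendsto_limit_sf:
  assumes "X \<in> sets (count_space \<nat>)"
  shows "((\<lambda>n. pushed n X) \<longlongrightarrow> limit_sf X) U"
proof -
  have "eventually (\<lambda>n. pushed n X \<in> {0..1}) U"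
    using inc_norm_submod_pushed assms by (auto simp: inc_norm_submod_def)
  from ultrafilter_tendsto_compact[OF ultrafilter compact_Icc this]
  obtain L where "((\<lambda>n. pushed n X) \<longlongrightarrow> L) U"
    by blast
  moreover from this have "limit_sf X = L"
    unfolding limit_sf_def by (rule tendsto_Lim[rotated]) (simp add: U_nontrivial)
  ultimately show ?thesis by simp
qed

lemma inc_norm_submod_limit_sf: "inc_norm_submod (count_space \<nat>) limit_sf"
  by (rule inc_norm_submod_limit[OF U_nontrivial inc_norm_submod_pushed tendsto_limit_sf])

lemma limit_quotient_approximable:
  assumes "y \<in> Qk k (count_space \<nat>) limit_sf"
  shows "\<exists>w. eventually (\<lambda>n. w n \<in> Qk k (M n) (\<phi> n)) U \<and> (\<forall>A. ((\<lambda>n. w n A) \<longlongrightarrow> y A) U)"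
proof -
  obtain G where G: "quotient_map k (count_space \<nat>) G"
    and y: "y = quotient_sf k (count_space \<nat>) limit_sf G"
    using assms by (auto simp: Qk_eq_image)
  define w where "w n = quotient_sf k (count_space \<nat>) (pushed n) G" for n
  have "w n \<in> Qk k (M n) (\<phi> n)" for n
  proof -
    have "w n = quotient_sf k (M n) (\<phi> n) (G \<circ> encode (M n) (\<phi> n) n)"
      unfolding w_def using measurable_space[OF encode_measurable]
      by (intro quotient_sf_pushforward) auto
    moreover have "quotient_map k (M n) (G \<circ> encode (M n) (\<phi> n) n)"
      by (rule quotient_map_comp[OF G encode_measurable])
    ultimately show ?thesis
      unfolding Qk_eq_image by blast
  qed
  then have "eventually (\<lambda>n. w n \<in> Qk k (M n) (\<phi> n)) U"
    by simp
  moreover have "\<forall>A. ((\<lambda>n. w n A) \<longlongrightarrow> y A) U"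
    unfolding w_def y by (intro allI tendsto_quotient_sf[OF G tendsto_limit_sf])
  ultimately show ?thesis by blast
qed

lemma quotient_test_map_eq_pushed:
  assumes "i < n"
  shows "quotient_sf k (M n) (\<phi> n) (test_map (M n) (\<phi> n) i) =
    quotient_sf k (count_space \<nat>) (pushed n) (decode i)"
proof -
  have "quotient_sf k (M n) (\<phi> n) (test_map (M n) (\<phi> n) i) =
      quotient_sf k (M n) (\<phi> n) (decode i \<circ> encode (M n) (\<phi> n) n)"
    by (rule quotient_sf_cong) (simp add: decode_encode[OF assms])
  also have "\<dots> = quotient_sf k (count_space \<nat>) (pushed n) (decode i)"
    using measurable_space[OF encode_measurable]
    by (intro quotient_sf_pushforward[symmetric]) auto
  finally show ?thesis .
qed

lemma occupied_cell_approximable: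
  assumes "1 \<le> k" and occupied: "eventually (\<lambda>n. \<exists>x\<in>Qk k (M n) (\<phi> n). grid_cell k m x = c) U"
  shows "\<exists>w. \<exists>y\<in>Qk k (count_space \<nat>) limit_sf.
    eventually (\<lambda>n. grid_cell k m (w n) = c) U \<and> (\<forall>A. ((\<lambda>n. w n A) \<longlongrightarrow> y A) U)"
proof -
  obtain n x where "x \<in> Qk k (M n) (\<phi> n)" "grid_cell k m x = c"
    using eventually_happens'[OF U_nontrivial occupied] by blast
  then have "c \<in> grid k m"
    using Qk_subset_unit_cube[OF inc_norm_submod] grid_cell_in_grid by blast
  with \<open>1 \<le> k\<close> have "(k, m, c) \<in> tests"
    by (simp add: tests_def)
  then obtain i where i: "test i = (k, m, c)"
    using surj_test by blast
  define w where "w n = quotient_sf k (M n) (\<phi> n) (test_map (M n) (\<phi> n) i)" for n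
  define y where "y = quotient_sf k (count_space \<nat>) limit_sf (decode i)"
  have "y \<in> Qk k (count_space \<nat>) limit_sf"
    using quotient_map_decode[of i] i by (auto simp: y_def Qk_eq_image)
  moreover have "eventually (\<lambda>n. grid_cell k m (w n) = c) U"
    using occupied by (rule eventually_mono)
      (auto simp: Qk_eq_image w_def test_map_def i intro: grid_cell_cell_map)
  moreover have "((\<lambda>n. w n A) \<longlongrightarrow> y A) U" for A
  proof -
    have "eventually (\<lambda>n. quotient_sf k (count_space \<nat>) (pushed n) (decode i) A = w n A) U"
      using filter_leD[OF le_sequentially eventually_gt_at_top[of i]]
      by (rule eventually_mono) (simp add: w_def quotient_test_map_eq_pushed)
    moreover have "((\<lambda>n. quotient_sf k (count_space \<nat>) (pushed n) (decode i) A) \<longlongrightarrow> y A) U"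
      unfolding y_def using quotient_map_decode[of i] i
      by (intro tendsto_quotient_sf tendsto_limit_sf) auto
    ultimately show ?thesis by (rule tendsto_cong[THEN iffD1])
  qed
  ultimately show ?thesis by blast
qed

lemma tendsto_hausdist_Qk:
  assumes "1 \<le> k"
  shows "((\<lambda>n. hausdist_k k (Qk k (M n) (\<phi> n)) (Qk k (count_space \<nat>) limit_sf)) \<longlongrightarrow> 0) U"
proof (rule tendsto_hausdist_k_zero)
  show "Qk k (M n) (\<phi> n) \<noteq> {}" "Qk k (count_space \<nat>) limit_sf \<noteq> {}" for n
    using Qk_nonempty[OF assms] by auto
  fix \<delta> :: real assume "0 < \<delta>"
  show "eventually (\<lambda>n. \<forall>x\<in>Qk k (M n) (\<phi> n). \<exists>y\<in>Qk k (count_space \<nat>) limit_sf. dist_k k x y \<le> \<delta>) U"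
    by (rule eventually_source_covered[OF ultrafilter Qk_subset_unit_cube[OF inc_norm_submod]
          \<open>0 < \<delta>\<close> occupied_cell_approximable[OF assms]])
  show "eventually (\<lambda>n. \<forall>y\<in>Qk k (count_space \<nat>) limit_sf. \<exists>x\<in>Qk k (M n) (\<phi> n). dist_k k x y \<le> \<delta>) U"
    by (rule eventually_target_covered[OF Qk_subset_unit_cube[OF inc_norm_submod_limit_sf]
          \<open>0 < \<delta>\<close> limit_quotient_approximable])
qed

lemma tendsto_sf_dist: "((\<lambda>n. sf_dist (M n) (\<phi> n) (count_space \<nat>) limit_sf) \<longlongrightarrow> 0) U"
proof -
  define a where "a k n = (1/2) ^ Suc k *
      hausdist_k (Suc k) (Qk (Suc k) (M n) (\<phi> n)) (Qk (Suc k) (count_space \<nat>) limit_sf)" for k n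
  have "((\<lambda>n. a k n) \<longlongrightarrow> 0) U" for k
    unfolding a_def by (intro tendsto_mult_right_zero tendsto_hausdist_Qk) simp
  moreover have "norm (a k n) \<le> (sqrt 2 / 2) ^ Suc k" for k n
  proof -
    have h: "0 \<le> hausdist_k (Suc k) (Qk (Suc k) (M n) (\<phi> n)) (Qk (Suc k) (count_space \<nat>) limit_sf)
        \<and> hausdist_k (Suc k) (Qk (Suc k) (M n) (\<phi> n)) (Qk (Suc k) (count_space \<nat>) limit_sf)
          \<le> sqrt 2 ^ Suc k"
      by (intro hausdist_k_unit_cube Qk_nonempty Qk_subset_unit_cube inc_norm_submod
          inc_norm_submod_limit_sf) simp_all
    then have "0 \<le> a k n"
      by (simp add: a_def)
    moreover have "a k n \<le> (1/2) ^ Suc k * sqrt 2 ^ Suc k"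
      unfolding a_def by (rule mult_left_mono) (use h in simp_all)
    ultimately show ?thesis
      by (simp add: power_divide)
  qed
  moreover have "summable (\<lambda>k. (sqrt 2 / 2 :: real) ^ Suc k)"
    using real_sqrt_less_mono[of 2 4] by (simp add: summable_Suc_iff)
  ultimately have "((\<lambda>n. \<Sum>k. a k n) \<longlongrightarrow> (\<Sum>k. 0)) U"
    using tannerys_theorem[of a "\<lambda>_. 0" U "\<lambda>k. (sqrt 2 / 2) ^ Suc k"] U_nontrivial
    by (auto intro: always_eventually)
  then show ?thesis
    by (simp add: sf_dist_def a_def)
qed

end

theorem corollary3p11:
  fixes M :: "nat \<Rightarrow> 'a measure" and \<phi> :: "nat \<Rightarrow> 'a set \<Rightarrow> real"
  assumes "\<And>n. standard_borel (M n)"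
    and "\<And>n. inc_norm_submod (M n) (\<phi> n)"
  shows "\<exists>(r :: nat \<Rightarrow> nat) (N :: real measure) (\<psi> :: real set \<Rightarrow> real).
           strict_mono r \<and> standard_borel N \<and> inc_norm_submod N \<psi> \<and>
           (\<lambda>n. sf_dist (M (r n)) (\<phi> (r n)) N \<psi>) \<longlonglongrightarrow> 0"
proof -
  obtain U :: "nat filter" where "ultrafilter U" "U \<le> sequentially"
    using ultrafilter_le_filter[OF sequentially_bot] by blast
  interpret ultralimit_sf M \<phi> U
    using assms(2) \<open>ultrafilter U\<close> \<open>U \<le> sequentially\<close> by unfold_locales
  obtain r where "strict_mono r"
    and "((\<lambda>n. sf_dist (M n) (\<phi> n) (count_space \<nat>) limit_sf) \<circ> r) \<longlonglongrightarrow> 0"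
    using tendsto_imp_subseq_LIMSEQ[OF tendsto_sf_dist U_nontrivial \<open>U \<le> sequentially\<close>] by blast
  moreover have "standard_borel (count_space (\<nat> :: real set))"
    by (rule standard_borel_count_space) (simp add: Nats_def)
  ultimately show ?thesis
    using inc_norm_submod_limit_sf unfolding comp_def
    by (intro exI[of _ r] exI[of _ "count_space \<nat>"] exI[of _ limit_sf] conjI)
qed

end
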